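(* Let $(\lambda_n)_{n\ge1}$ be a sequence in $\mathbb{D}$ with $\sum_{n\ge1}(1-|\lambda_n|)=\infty$. Let $B_0=1$ and $B_n(z)=\prod_{k=1}^n\frac{\lambda_k-z}{1-\bar\lambda_kz}$ for $n\ge1$. Let $f$ be an entire function. Then \[ f=f(\lambda_1)+\sum_{n=1}^\infty\Big((T_{\bar B_n}f)(\lambda_{n+1})-\bar\lambda_n\,(T_{\bar B_{n-1}}f)(\lambda_n)\Big)B_n, \] where the series converges in $H^2$-norm.
   Context: $H^2$ is the Hardy space on the unit disc $\mathbb{D}$ (an entire function restricted to $\mathbb{D}$ belongs to $H^2$). For $\varphi\in L^\infty(\mathbb{T})$, $T_\varphi f=P_+(\varphi f)$ with $P_+$ the orthogonal projection $L^2(\mathbb{T})\to H^2$; $\bar B_n$ denotes the conjugate of the boundary function of $B_n$, so $(T_{\bar B_n}f)(\lambda)$ is the value at $\lambda\in\mathbb{D}$ of the $H^2$ function $T_{\bar B_n}f$. *)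

theory Defs
  imports "HOL-Analysis.Analysis"
begin

definition fourier_coeff :: "(complex \<Rightarrow> complex) \<Rightarrow> nat \<Rightarrow> complex" where
  "fourier_coeff g k = integral {0..2*pi} (\<lambda>t. g (cis t) * cis (- (real k * t))) / (2 * pi)"

text \<open>Riesz projection P_+ : L^2(T) to H^2, the result viewed as a function on the disc:
  (P_+ g)(z) = sum over k >= 0 of the k-th Fourier coefficient times z^k.\<close>
definition riesz_proj :: "(complex \<Rightarrow> complex) \<Rightarrow> complex \<Rightarrow> complex" where
  "riesz_proj g z = (\<Sum>k. fourier_coeff g k * z ^ k)"

definition toeplitz :: "(complex \<Rightarrow> complex) \<Rightarrow> (complex \<Rightarrow> complex) \<Rightarrow> complex \<Rightarrow> complex" where
  "toeplitz phi f = riesz_proj (\<lambda>w. phi w * f w)"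

text \<open>Taylor coefficients at 0 and the squared H^2 norm (sum of squared moduli of the Taylor
  coefficients), valued in ennreal so that it is infinite for functions outside H^2.\<close>
definition taylor_coeff :: "(complex \<Rightarrow> complex) \<Rightarrow> nat \<Rightarrow> complex" where
  "taylor_coeff g k = (deriv ^^ k) g 0 / fact k"

definition h2_norm_sq :: "(complex \<Rightarrow> complex) \<Rightarrow> ennreal" where
  "h2_norm_sq g = (\<Sum>k. ennreal ((cmod (taylor_coeff g k))\<^sup>2))"

definition blaschke :: "(nat \<Rightarrow> complex) \<Rightarrow> nat \<Rightarrow> complex \<Rightarrow> complex" where
  "blaschke lam n z = (\<Prod>k=1..n. (lam k - z) / (1 - cnj (lam k) * z))"

end

theory Submission
  imports Defs "HOL-Complex_Analysis.Complex_Analysis"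
begin

text \<open>
  Write \<open>G n = T(cnj B n) f\<close> and \<open>b a z = (a - z) / (1 - cnj a * z)\<close>. Expanding
  \<open>1 / (1 - a * cnj w)\<close> as a geometric series on the circle computes the Fourier coefficients
  of \<open>cnj (b a) * \<phi>\<close>, and yields
  \<open>G n z - G n (\<lambda> (n+1)) = b (\<lambda> (n+1)) z * (G (n+1) z - cnj (\<lambda> (n+1)) * G n (\<lambda> (n+1)))\<close>.
  Telescoping, the \<open>N\<close>-th remainder is \<open>B (N+1)\<close> times \<open>G (N+1)\<close> minus a constant. As
  \<open>|B (N+1)| = 1\<close> on the circle, Parseval bounds its \<open>H\<^sup>2\<close> norm by the Fourier coefficients of
  \<open>G (N+1)\<close>. By Cauchy's inequality on the circle of radius \<open>1/2\<close>, where
  \<open>|B (N+1)| \<le> exp (- (\<Sum>k\<le>N+1. 1 - |\<lambda> k|) / 6)\<close>, the \<open>k\<close>-th of them is at most this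
  exponential times \<open>2\<^sup>-\<^sup>k\<close> times a constant depending on \<open>f\<close>; the divergence of
  \<open>\<Sum>k. 1 - |\<lambda> k|\<close> sends the bound to \<open>0\<close>.
\<close>

lemma has_integral_suminf_continuous:
  fixes q :: "nat \<Rightarrow> real \<Rightarrow> complex"
  assumes M: "summable M" and bd: "\<And>i t. t \<in> {a..b} \<Longrightarrow> norm (q i t) \<le> M i"
    and cont: "\<And>i. continuous_on {a..b} (q i)"
  shows "((\<lambda>t. \<Sum>i. q i t) has_integral (\<Sum>i. integral {a..b} (q i))) {a..b}"
proof -
  have u: "uniform_limit {a..b} (\<lambda>n t. \<Sum>i<n. q i t) (\<lambda>t. \<Sum>i. q i t) sequentially"
    by (rule Weierstrass_m_test[OF bd M]) auto
  have c: "\<And>n. continuous_on {a..b} (\<lambda>t. \<Sum>i<n. q i t)"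
    by (intro continuous_intros cont)
  obtain I J where I: "\<And>n. ((\<lambda>t. \<Sum>i<n. q i t) has_integral I n) {a..b}"
     and J: "((\<lambda>t. \<Sum>i. q i t) has_integral J) {a..b}" and IJ: "I \<longlonglongrightarrow> J"
    using uniform_limit_integral[OF u c] by auto
  have qi: "\<And>i. ((q i) has_integral integral {a..b} (q i)) {a..b}"
    using cont integrable_continuous_interval by blast
  have "I = (\<lambda>n. \<Sum>i<n. integral {a..b} (q i))"
  proof
    fix n
    have "((\<lambda>t. \<Sum>i<n. q i t) has_integral (\<Sum>i<n. integral {a..b} (q i))) {a..b}"
      by (rule has_integral_sum) (use qi in auto)
    thus "I n = (\<Sum>i<n. integral {a..b} (q i))" using I has_integral_unique by blast
  qed
  hence "(\<lambda>i. integral {a..b} (q i)) sums J" using IJ by (simp add: sums_def)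
  thus ?thesis using J sums_unique by metis
qed

lemma has_integral_cis_int:
  fixes m :: int
  shows "((\<lambda>t. cis (of_int m * t)) has_integral (if m = 0 then 2*pi else 0)) {0..2*pi}"
proof (cases "m = 0")
  case True
  then show ?thesis
    using has_integral_const_real[of "1::complex" 0 "2*pi"] by (simp add: scaleR_conv_of_real)
next
  case False
  define F where "F t = cis (of_int m * t) / (\<i> * of_int m)" for t
  have F_eq: "F = (\<lambda>t. exp (\<i> * of_int m * complex_of_real t) / (\<i> * of_int m))"
    by (auto simp: F_def cis_conv_exp fun_eq_iff mult_ac)
  have "(F has_vector_derivative cis (of_int m * t)) (at t within {0..2*pi})" for t
  proof -
    have "((\<lambda>t. exp (\<i> * of_int m * complex_of_real t) / (\<i> * of_int m)) has_vector_derivative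
           exp (\<i> * of_int m * complex_of_real t) * (\<i> * of_int m) / (\<i> * of_int m))
           (at t within {0..2*pi})"
      by (auto intro!: derivative_eq_intros has_vector_derivative_real_field)
    thus ?thesis using False by (simp add: F_eq cis_conv_exp mult_ac)
  qed
  hence "((\<lambda>t. cis (of_int m * t)) has_integral (F (2*pi) - F 0)) {0..2*pi}"
    by (intro fundamental_theorem_of_calculus) auto
  moreover have "cis (of_int m * (2*pi)) = 1"
    using cis_multiple_2pi[of "of_int m"] by (simp add: mult_ac)
  ultimately show ?thesis using False by (simp add: F_def)
qed

lemma summable_norm_power2:
  fixes c :: "nat \<Rightarrow> 'a::real_normed_vector"
  assumes sc: "summable (\<lambda>k. norm (c k))"
  shows "summable (\<lambda>k. (norm (c k))^2)"
proof (rule summable_comparison_test[of _ "\<lambda>k. (\<Sum>k. norm (c k)) * norm (c k)"])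
  have "norm (c k) \<le> (\<Sum>k. norm (c k))" for k
    using sum_le_suminf[OF sc, of "{k}"] by simp
  thus "\<exists>N. \<forall>n\<ge>N. norm ((norm (c n))\<^sup>2) \<le> (\<Sum>k. norm (c k)) * norm (c n)"
    by (auto simp: power2_eq_square intro!: mult_right_mono)
  show "summable (\<lambda>k. (\<Sum>k. norm (c k)) * norm (c k))" using sc by (rule summable_mult)
qed

lemma has_integral_powser_cis_mult_cis:
  fixes c :: "nat \<Rightarrow> complex" and l :: int
  assumes sc: "summable (\<lambda>k. norm (c k))"
  shows "((\<lambda>t. (\<Sum>k. c k * cis (real k * t)) * cis (of_int l * t)) has_integral
           (if l \<le> 0 then 2*pi * c (nat (-l)) else 0)) {0..2*pi}"
proof -
  define q where "q k t = c k * cis (real k * t) * cis (of_int l * t)" for k t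
  have "((\<lambda>t. \<Sum>k. q k t) has_integral (\<Sum>k. integral {0..2*pi} (q k))) {0..2*pi}"
    by (rule has_integral_suminf_continuous[OF sc])
       (auto simp: q_def norm_mult intro!: continuous_intros)
  moreover have "(\<Sum>k. q k t) = (\<Sum>k. c k * cis (real k * t)) * cis (of_int l * t)" for t
  proof -
    have "summable (\<lambda>k. c k * cis (real k * t))"
      by (rule summable_norm_cancel) (use sc in \<open>simp add: norm_mult\<close>)
    thus ?thesis unfolding q_def by (rule suminf_mult2[symmetric])
  qed
  moreover have "integral {0..2*pi} (q k) = c k * (if int k + l = 0 then 2*pi else 0)" for k
  proof -
    have "q k = (\<lambda>t. c k * cis (of_int (int k + l) * t))"
      by (auto simp: q_def fun_eq_iff cis_mult algebra_simps)
    thus ?thesis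
      using has_integral_cis_int[of "int k + l"] has_integral_mult_right integral_unique by metis
  qed
  moreover have "(\<Sum>k. c k * (if int k + l = 0 then 2*pi else 0)) =
                 (if l \<le> 0 then 2*pi * c (nat (-l)) else 0)"
  proof (cases "l \<le> 0")
    case True
    have "(\<lambda>k. c k * (if int k + l = 0 then 2*pi else 0)) = (\<lambda>k. if k = nat (-l) then 2*pi * c k else 0)"
      using True by (auto simp: fun_eq_iff)
    thus ?thesis using sums_single[of "nat (-l)" "\<lambda>k. 2*pi * c k"] True sums_unique by metis
  next
    case False
    hence "(\<lambda>k. c k * (if int k + l = 0 then 2*pi else 0)) = (\<lambda>k. 0)" by (auto simp: fun_eq_iff)
    thus ?thesis using False by simp
  qed
  ultimately show ?thesis by simp
qed

lemma parseval_powser_cis: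
  fixes c :: "nat \<Rightarrow> complex"
  assumes sc: "summable (\<lambda>k. norm (c k))"
  shows "((\<lambda>t. (norm (\<Sum>k. c k * cis (real k * t)))^2) has_integral
           (2*pi * (\<Sum>k. (norm (c k))^2))) {0..2*pi}"
proof -
  define F where "F t = (\<Sum>k. c k * cis (real k * t))" for t
  have u: "uniform_limit {0..2*pi} (\<lambda>n t. \<Sum>k<n. c k * cis (real k * t)) F sequentially"
    unfolding F_def by (rule Weierstrass_m_test[OF _ sc]) (auto simp: norm_mult)
  have contF: "continuous_on {0..2*pi} F"
    by (rule uniform_limit_theorem[OF _ u]) (auto intro!: always_eventually continuous_intros)
  obtain MF where MF: "\<And>t. t \<in> {0..2*pi} \<Longrightarrow> norm (F t) \<le> MF"
    using compact_imp_bounded[OF compact_continuous_image[OF contF compact_Icc]]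
    unfolding bounded_iff by (metis atLeastAtMost_iff image_eqI)
  define q where "q k t = c k * cis (real k * t) * cnj (F t)" for k t
  have "((\<lambda>t. \<Sum>k. q k t) has_integral (\<Sum>k. integral {0..2*pi} (q k))) {0..2*pi}"
  proof (rule has_integral_suminf_continuous[of "\<lambda>k. norm (c k) * MF"])
    show "summable (\<lambda>k. norm (c k) * MF)" using sc by (rule summable_mult2)
    show "norm (q i t) \<le> norm (c i) * MF" if "t \<in> {0..2*pi}" for i t
      using MF[OF that] by (auto simp: q_def norm_mult intro!: mult_left_mono)
    show "continuous_on {0..2*pi} (q i)" for i
      unfolding q_def by (intro continuous_intros continuous_on_cnj contF)
  qed
  moreover have "(\<Sum>k. q k t) = of_real ((norm (F t))^2)" for t
  proof -
    have "summable (\<lambda>k. c k * cis (real k * t))"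
      by (rule summable_norm_cancel) (use sc in \<open>simp add: norm_mult\<close>)
    hence "(\<Sum>k. q k t) = F t * cnj (F t)" unfolding q_def F_def by (rule suminf_mult2[symmetric])
    thus ?thesis by (metis complex_norm_square)
  qed
  moreover have "integral {0..2*pi} (q k) = of_real (2*pi * (norm (c k))^2)" for k
  proof -
    have "((\<lambda>t. F t * cis (of_int (- int k) * t)) has_integral (2*pi * c k)) {0..2*pi}"
      using has_integral_powser_cis_mult_cis[OF sc, of "- int k"]
      unfolding F_def by (simp del: of_int_minus)
    hence "(cnj \<circ> (\<lambda>t. F t * cis (of_int (- int k) * t)) has_integral cnj (2*pi * c k)) {0..2*pi}"
      by (subst has_integral_cnj)
    hence "((\<lambda>t. c k * (cnj (F t) * cis (real k * t))) has_integral c k * (2*pi * cnj (c k))) {0..2*pi}"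
      by (intro has_integral_mult_right) (simp add: o_def cis_cnj)
    moreover have "q k = (\<lambda>t. c k * (cnj (F t) * cis (real k * t)))"
      by (auto simp: q_def fun_eq_iff mult_ac)
    ultimately have "integral {0..2*pi} (q k) = c k * (2*pi * cnj (c k))"
      by (simp only: integral_unique)
    thus ?thesis by (simp add: complex_norm_square[symmetric] mult_ac)
  qed
  moreover have "(\<lambda>k. complex_of_real (2*pi * (norm (c k))^2)) sums
                 of_real (2*pi * (\<Sum>k. (norm (c k))^2))"
    by (intro sums_of_real sums_mult summable_sums summable_norm_power2 sc)
  ultimately have I: "((\<lambda>t. complex_of_real ((norm (F t))^2)) has_integral
                       of_real (2*pi * (\<Sum>k. (norm (c k))^2))) {0..2*pi}"
    by (simp add: sums_iff)
  have "(\<lambda>t. (norm (F t))^2) integrable_on {0..2*pi}"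
    by (intro integrable_continuous_interval continuous_intros contF)
  then obtain J where J: "((\<lambda>t. (norm (F t))^2) has_integral J) {0..2*pi}" by blast
  have "complex_of_real J = of_real (2*pi * (\<Sum>k. (norm (c k))^2))"
    using has_integral_unique[OF has_integral_of_real[OF J] I] .
  hence "J = 2*pi * (\<Sum>k. (norm (c k))^2)" using of_real_eq_iff by blast
  thus ?thesis using J unfolding F_def by simp
qed

lemma summable_norm_taylor_coeff_mult_power:
  assumes hol: "g holomorphic_on ball 0 \<rho>" and s: "0 \<le> s" "s < \<rho>"
  shows "summable (\<lambda>k. norm (taylor_coeff g k) * s^k)"
proof -
  define r where "r = (s + \<rho>) / 2"
  have r: "s < r" "r < \<rho>" using s by (auto simp: r_def)
  have "(\<lambda>n. (deriv ^^ n) g 0 / fact n * (complex_of_real r - 0)^n) sums g (of_real r)"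
    by (rule holomorphic_power_series[OF hol]) (use r s in auto)
  hence "summable (\<lambda>n. taylor_coeff g n * (complex_of_real r)^n)"
    by (auto simp: taylor_coeff_def sums_iff)
  hence "summable (\<lambda>n. norm (taylor_coeff g n * (complex_of_real s)^n))"
    by (rule powser_insidea) (use r s in auto)
  thus ?thesis using s by (simp add: norm_mult norm_power)
qed

lemma
  assumes hol: "g holomorphic_on ball 0 \<rho>" and r: "1 < \<rho>"
  shows summable_norm_taylor_coeff: "summable (\<lambda>k. norm (taylor_coeff g k))"
    and taylor_expansion_cis: "g (cis t) = (\<Sum>k. taylor_coeff g k * cis (real k * t))"
proof -
  show "summable (\<lambda>k. norm (taylor_coeff g k))"
    using summable_norm_taylor_coeff_mult_power[OF hol, of 1] r by simp
  have "(\<lambda>n. (deriv ^^ n) g 0 / fact n * (cis t - 0)^n) sums g (cis t)"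
    by (rule holomorphic_power_series[OF hol]) (use r in auto)
  thus "g (cis t) = (\<Sum>k. taylor_coeff g k * cis (real k * t))"
    by (simp add: taylor_coeff_def sums_iff Complex.DeMoivre)
qed

lemma fourier_coeff_eq_taylor_coeff:
  assumes hol: "g holomorphic_on ball 0 \<rho>" and r: "1 < \<rho>"
  shows "fourier_coeff g k = taylor_coeff g k"
proof -
  have "((\<lambda>t. g (cis t) * cis (- (real k * t))) has_integral 2*pi * taylor_coeff g k) {0..2*pi}"
    using has_integral_powser_cis_mult_cis[OF summable_norm_taylor_coeff[OF hol r], of "- int k"]
    by (simp add: taylor_expansion_cis[OF hol r, symmetric])
  thus ?thesis unfolding fourier_coeff_def by (simp add: integral_unique)
qed

lemma parseval_holomorphic:
  assumes hol: "g holomorphic_on ball 0 \<rho>" and r: "1 < \<rho>"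
  shows "((\<lambda>t. (norm (g (cis t)))^2) has_integral (2*pi * (\<Sum>k. (norm (taylor_coeff g k))^2))) {0..2*pi}"
  using parseval_powser_cis[OF summable_norm_taylor_coeff[OF hol r]]
  by (simp add: taylor_expansion_cis[OF hol r, symmetric])

lemma h2_norm_sq_holomorphic:
  assumes hol: "g holomorphic_on ball 0 \<rho>" and r: "1 < \<rho>"
  shows "h2_norm_sq g = ennreal (\<Sum>k. (norm (taylor_coeff g k))^2)"
  unfolding h2_norm_sq_def
  by (intro suminf_ennreal2 summable_norm_power2 summable_norm_taylor_coeff[OF hol r]) simp

text \<open>This removes the unimodular factor \<open>B (N+1)\<close> from the remainder.\<close>
lemma h2_norm_sq_le_of_circle_modulus:
  fixes \<eta> :: "nat \<Rightarrow> complex"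
  assumes hol: "g holomorphic_on ball 0 \<rho>" and r: "1 < \<rho>"
    and \<eta>_le: "\<And>k. norm (\<eta> k) \<le> D / 2^k"
    and circle: "\<And>t. norm (g (cis t)) = norm (\<Sum>k. \<eta> k * cis (real k * t))"
  shows "h2_norm_sq g \<le> ennreal (4/3 * D^2)"
proof -
  have D: "0 \<le> D" using order_trans[OF norm_ge_zero \<eta>_le[of 0]] by simp
  have \<eta>_le': "norm (\<eta> k) \<le> D * (1/2)^k" for k
    using \<eta>_le[of k] by (simp add: power_one_over)
  have s\<eta>: "summable (\<lambda>k. norm (\<eta> k))"
    by (rule summable_comparison_test[of _ "\<lambda>k. D * (1/2::real)^k"])
       (use \<eta>_le' in \<open>auto intro!: summable_mult summable_geometric\<close>)
  have "((\<lambda>t. (norm (g (cis t)))^2) has_integral (2*pi * (\<Sum>k. (norm (\<eta> k))^2))) {0..2*pi}"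
    unfolding circle by (rule parseval_powser_cis[OF s\<eta>])
  hence "2*pi * (\<Sum>k. (norm (taylor_coeff g k))^2) = 2*pi * (\<Sum>k. (norm (\<eta> k))^2)"
    by (rule has_integral_unique[OF parseval_holomorphic[OF hol r]])
  hence "(\<Sum>k. (norm (taylor_coeff g k))^2) = (\<Sum>k. (norm (\<eta> k))^2)" by simp
  also have "\<dots> \<le> (\<Sum>k. D^2 * (1/4::real)^k)"
  proof (rule suminf_le)
    show "(norm (\<eta> k))^2 \<le> D^2 * (1/4::real)^k" for k
    proof -
      have "(norm (\<eta> k))^2 \<le> (D * (1/2)^k)^2" by (rule power_mono[OF \<eta>_le' norm_ge_zero])
      also have "\<dots> = D^2 * (1/4)^k"
        by (simp add: power2_eq_square algebra_simps flip: power_mult_distrib)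
      finally show ?thesis .
    qed
    show "summable (\<lambda>k. (norm (\<eta> k))^2)" by (rule summable_norm_power2[OF s\<eta>])
    show "summable (\<lambda>k. D^2 * (1/4::real)^k)" by (intro summable_mult summable_geometric) simp
  qed
  also have "\<dots> = 4/3 * D^2"
    using suminf_mult[OF summable_geometric[of "1/4::real"], of "D^2"] suminf_geometric[of "1/4::real"]
    by simp
  finally show ?thesis by (simp add: h2_norm_sq_holomorphic[OF hol r] ennreal_leI)
qed


definition blaschke_factor :: "complex \<Rightarrow> complex \<Rightarrow> complex" where
  "blaschke_factor a w = (a - w) / (1 - cnj a * w)"

lemma blaschke_factor_denom_nonzero:
  assumes "norm a * norm w < 1"
  shows "1 - cnj a * w \<noteq> 0"
proof
  assume "1 - cnj a * w = 0"
  hence "norm (cnj a * w) = 1" by (metis eq_iff_diff_eq_0 norm_one)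
  thus False using assms by (simp add: norm_mult)
qed

lemma one_minus_norm_blaschke_factor_sq:
  assumes "1 - cnj a * w \<noteq> 0"
  shows "1 - (norm (blaschke_factor a w))^2 =
         (1 - (norm a)^2) * (1 - (norm w)^2) / (norm (1 - cnj a * w))^2"
proof -
  have "(norm (1 - cnj a * w))^2 - (norm (a - w))^2 = (1 - (norm a)^2) * (1 - (norm w)^2)"
    unfolding cmod_power2 by (simp add: power2_eq_square algebra_simps)
  thus ?thesis
    using assms by (simp add: blaschke_factor_def norm_divide power_divide field_simps)
qed

lemma norm_blaschke_factor_circle:
  assumes "norm a < 1" and "norm w = 1"
  shows "norm (blaschke_factor a w) = 1"
proof -
  have "1 - cnj a * w \<noteq> 0" using assms by (intro blaschke_factor_denom_nonzero) simp
  hence "(norm (blaschke_factor a w))^2 = 1"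
    using one_minus_norm_blaschke_factor_sq[of a w] assms(2) by simp
  thus ?thesis using power2_eq_iff_nonneg[of "norm (blaschke_factor a w)" 1] by simp
qed

lemma norm_blaschke_factor_le_exp:
  assumes a: "norm a < 1" and w: "norm w \<le> 1/2"
  shows "norm (blaschke_factor a w) \<le> exp (- (1 - norm a) / 6)"
proof -
  define x where "x = norm a"
  define D where "D = (norm (1 - cnj a * w))^2"
  have x: "0 \<le> x" "x < 1" using a by (auto simp: x_def)
  have xw: "x * norm w \<le> 1/2" using mult_mono[of x 1 "norm w" "1/2"] x w by simp
  have nz: "1 - cnj a * w \<noteq> 0" using xw by (intro blaschke_factor_denom_nonzero) (simp add: x_def)
  have D: "0 < D" "D \<le> 9/4"
  proof -
    show "0 < D" using nz by (simp add: D_def)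
    have "norm (1 - cnj a * w) \<le> 3/2"
      using norm_triangle_ineq4[of 1 "cnj a * w"] xw by (simp add: x_def norm_mult)
    from power_mono[OF this norm_ge_zero, of 2] show "D \<le> 9/4" by (simp add: D_def power2_eq_square)
  qed
  have "(1 - x) / 3 \<le> (1 - x^2) * (3/4) / D"
  proof -
    have "(1 - x) / 3 \<le> (1 - x) * (3/4) / (9/4)" by simp
    also have "\<dots> \<le> (1 - x^2) * (3/4) / (9/4)"
      using x by (intro divide_right_mono mult_right_mono) (auto simp: power2_eq_square mult_left_le_one_le)
    also have "\<dots> \<le> (1 - x^2) * (3/4) / D"
      using x D by (intro divide_left_mono mult_nonneg_nonneg mult_pos_pos) (auto simp: abs_square_le_1)
    finally show ?thesis .
  qed
  also have "\<dots> \<le> (1 - x^2) * (1 - (norm w)^2) / D"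
  proof -
    have "(norm w)^2 \<le> 1/4" using power_mono[OF w norm_ge_zero, of 2] by (simp add: power2_eq_square)
    thus ?thesis using x D by (intro divide_right_mono mult_left_mono) (auto simp: abs_square_le_1)
  qed
  also have "\<dots> = 1 - (norm (blaschke_factor a w))^2"
    using one_minus_norm_blaschke_factor_sq[OF nz] by (simp add: x_def D_def)
  finally have "(norm (blaschke_factor a w))^2 \<le> 1 + (- (1 - x) / 3)" by linarith
  also have "\<dots> \<le> exp (- (1 - x) / 3)" by (rule exp_ge_add_one_self)
  also have "\<dots> = (exp (- (1 - x) / 6))^2"
    by (simp add: power2_eq_square flip: exp_add)
  finally show ?thesis unfolding x_def by (rule power2_le_imp_le) simp
qed

lemma blaschke_0 [simp]: "blaschke lam 0 w = 1"
  by (simp add: blaschke_def)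

lemma blaschke_Suc: "blaschke lam (Suc n) w = blaschke lam n w * blaschke_factor (lam (Suc n)) w"
  by (simp add: blaschke_def blaschke_factor_def)

lemma norm_blaschke_circle:
  assumes "\<And>k. k \<ge> 1 \<Longrightarrow> norm (lam k) < 1" and "norm w = 1"
  shows "norm (blaschke lam n w) = 1"
  by (induction n) (use assms in \<open>simp_all add: blaschke_Suc norm_mult norm_blaschke_factor_circle\<close>)

lemma norm_blaschke_le_exp:
  assumes lam: "\<And>k. k \<ge> 1 \<Longrightarrow> norm (lam k) < 1" and w: "norm w \<le> 1/2"
  shows "norm (blaschke lam n w) \<le> exp (- (\<Sum>k=1..n. 1 - norm (lam k)) / 6)"
proof (induction n)
  case (Suc n)
  have "norm (blaschke lam (Suc n) w) = norm (blaschke lam n w) * norm (blaschke_factor (lam (Suc n)) w)"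
    by (simp add: blaschke_Suc norm_mult)
  also have "\<dots> \<le> exp (- (\<Sum>k=1..n. 1 - norm (lam k)) / 6) * exp (- (1 - norm (lam (Suc n))) / 6)"
    by (rule mult_mono[OF Suc.IH norm_blaschke_factor_le_exp]) (use lam w in auto)
  also have "\<dots> = exp (- (\<Sum>k=1..Suc n. 1 - norm (lam k)) / 6)"
    by (simp add: diff_divide_distrib add_divide_distrib flip: exp_add)
  finally show ?case .
qed simp

lemma blaschke_holomorphic_beyond_disc:
  assumes lam: "\<And>k. k \<ge> 1 \<Longrightarrow> norm (lam k) < 1"
  obtains \<rho> where "1 < \<rho>" "\<And>n. n \<le> N \<Longrightarrow> blaschke lam n holomorphic_on ball 0 \<rho>"
proof
  define m where "m = Max (insert 0 ((\<lambda>k. norm (lam k)) ` {1..N}))"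
  have m: "0 \<le> m" "m < 1" using lam by (auto simp: m_def Max_less_iff)
  have m_ge: "norm (lam k) \<le> m" if "k \<in> {1..N}" for k
    unfolding m_def by (rule Max_ge) (use that in auto)
  show "1 < 2 / (1 + m)" using m by (simp add: field_simps)
  fix n assume "n \<le> N"
  have "blaschke_factor (lam k) holomorphic_on ball 0 (2 / (1 + m))" if k: "k \<in> {1..n}" for k
  proof -
    have "1 - cnj (lam k) * w \<noteq> 0" if "w \<in> ball 0 (2 / (1 + m))" for w
    proof (rule blaschke_factor_denom_nonzero)
      have "norm (lam k) * norm w \<le> m * (2 / (1 + m))"
        using that m(1) m_ge[of k] k \<open>n \<le> N\<close> by (intro mult_mono) auto
      also have "\<dots> < 1" using m by (simp add: field_simps)
      finally show "norm (lam k) * norm w < 1" .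
    qed
    thus ?thesis unfolding blaschke_factor_def by (intro holomorphic_intros) auto
  qed
  hence "(\<lambda>w. \<Prod>k=1..n. blaschke_factor (lam k) w) holomorphic_on ball 0 (2 / (1 + m))"
    by (rule holomorphic_on_prod)
  thus "blaschke lam n holomorphic_on ball 0 (2 / (1 + m))"
    by (simp add: blaschke_factor_def blaschke_def[abs_def])
qed

lemma exp_neg_partial_sums_tendsto_0:
  fixes g :: "nat \<Rightarrow> real"
  assumes g: "\<And>n. 0 \<le> g n" and div: "(\<Sum>n. ennreal (g n)) = \<infinity>" and c: "0 < c"
  shows "(\<lambda>N. exp (- c * (\<Sum>i<N. g i))) \<longlonglongrightarrow> 0"
proof -
  have "\<not> summable g"
  proof
    assume "summable g"
    hence "(\<Sum>n. ennreal (g n)) = ennreal (\<Sum>n. g n)" using g by (intro suminf_ennreal2) auto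
    thus False using div by simp
  qed
  hence unbounded: "\<exists>N. Z \<le> (\<Sum>i<N. g i)" for Z
    using summableI_nonneg_bounded[of g Z] g by (meson linear)
  have "filterlim (\<lambda>N. \<Sum>i<N. g i) at_top sequentially"
    unfolding filterlim_at_top eventually_sequentially
  proof
    fix Z
    obtain N where "Z \<le> (\<Sum>i<N. g i)" using unbounded by blast
    moreover have "(\<Sum>i<N. g i) \<le> (\<Sum>i<n. g i)" if "N \<le> n" for n
      using that g by (intro sum_mono2) auto
    ultimately show "\<exists>N. \<forall>n\<ge>N. Z \<le> (\<Sum>i<n. g i)" by (meson order_trans)
  qed
  hence "filterlim (\<lambda>N. c * (\<Sum>i<N. g i)) at_top sequentially"
    using c by (intro filterlim_tendsto_pos_mult_at_top[OF tendsto_const]) auto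
  hence "((\<lambda>N. exp (- (c * (\<Sum>i<N. g i))))) \<longlonglongrightarrow> 0"
    by (intro filterlim_compose[OF exp_at_bot] filterlim_compose[OF filterlim_uminus_at_bot_at_top])
  thus ?thesis by simp
qed

lemma continuous_on_cis_holomorphic:
  assumes "g holomorphic_on ball 0 \<rho>" "1 < \<rho>"
  shows "continuous_on {0..2*pi} (\<lambda>t. g (cis t))"
proof (rule continuous_on_compose2[of "ball 0 \<rho>" g])
  show "continuous_on (ball 0 \<rho>) g" using assms(1) by (rule holomorphic_on_imp_continuous_on)
  show "cis ` {0..2*pi} \<subseteq> ball 0 \<rho>" using assms(2) by auto
qed (intro continuous_intros)

lemma continuous_on_Icc_bounded:
  assumes "continuous_on {a..b} (h :: real \<Rightarrow> 'a::real_normed_vector)"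
  obtains M where "\<And>t. t \<in> {a..b} \<Longrightarrow> norm (h t) \<le> M"
  using compact_imp_bounded[OF compact_continuous_image[OF assms compact_Icc]]
  unfolding bounded_iff by (metis image_eqI)

lemma has_integral_cnj_holomorphic_mult_cis:
  assumes hol: "g holomorphic_on ball 0 \<rho>" and r: "1 < \<rho>"
  shows "((\<lambda>t. cnj (g (cis t)) * cis (of_int l * t)) has_integral
           (if 0 \<le> l then 2*pi * cnj (taylor_coeff g (nat l)) else 0)) {0..2*pi}"
proof -
  have "((\<lambda>t. g (cis t) * cis (of_int (- l) * t)) has_integral
           (if - l \<le> 0 then 2*pi * taylor_coeff g (nat l) else 0)) {0..2*pi}"
    using has_integral_powser_cis_mult_cis[OF summable_norm_taylor_coeff[OF hol r], of "- l"]
    unfolding taylor_expansion_cis[OF hol r, symmetric] minus_minus .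
  hence "(cnj \<circ> (\<lambda>t. g (cis t) * cis (of_int (- l) * t)) has_integral
           cnj (if - l \<le> 0 then 2*pi * taylor_coeff g (nat l) else 0)) {0..2*pi}"
    by (subst has_integral_cnj)
  thus ?thesis by (cases "0 \<le> l") (simp_all add: o_def cis_cnj)
qed

lemma norm_taylor_coeff_le_half_circle:
  assumes hB: "B holomorphic_on ball 0 \<rho>" "1 < \<rho>" and Bs: "\<And>w. norm w = 1/2 \<Longrightarrow> norm (B w) \<le> \<epsilon>"
  shows "norm (taylor_coeff B j) \<le> \<epsilon> * 2^j"
proof -
  have sub: "cball 0 (1/2) \<subseteq> ball (0::complex) \<rho>" using hB(2) by auto
  have "norm ((deriv ^^ j) B 0) \<le> fact j * \<epsilon> / (1/2)^j"
  proof (rule Cauchy_inequality)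
    show "B holomorphic_on ball 0 (1/2)"
      using hB(1) sub ball_subset_cball by (metis holomorphic_on_subset order_trans)
    show "continuous_on (cball 0 (1/2)) B"
      using holomorphic_on_imp_continuous_on[OF hB(1)] sub by (rule continuous_on_subset)
    show "norm (B x) \<le> \<epsilon>" if "norm (0 - x) = 1/2" for x using Bs that by simp
  qed simp
  thus ?thesis by (simp add: taylor_coeff_def norm_divide field_simps)
qed

text \<open>Only the \<open>(m - k)\<close>-th Taylor coefficient of \<open>B\<close> meets the \<open>m\<close>-th one of \<open>f\<close> in the
  \<open>k\<close>-th Fourier coefficient, whence the factor \<open>2\<^sup>-\<^sup>k\<close>.\<close>
lemma norm_fourier_coeff_cnj_mult_le:
  assumes hB: "B holomorphic_on ball 0 \<rho>" "1 < \<rho>" and Bs: "\<And>w. norm w = 1/2 \<Longrightarrow> norm (B w) \<le> \<epsilon>"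
    and hf: "f holomorphic_on UNIV"
  shows "norm (fourier_coeff (\<lambda>w. cnj (B w) * f w) k) \<le> \<epsilon> * (\<Sum>m. norm (taylor_coeff f m) * 2^m) / 2^k"
proof -
  define a where "a m = taylor_coeff f m" for m
  define A where "A = (\<Sum>m. norm (a m) * 2^m)"
  have hf2: "f holomorphic_on ball 0 2" using hf by (rule holomorphic_on_subset) auto
  have hf3: "f holomorphic_on ball 0 3" using hf by (rule holomorphic_on_subset) auto
  have sA: "summable (\<lambda>m. norm (a m) * 2^m)"
    unfolding a_def by (rule summable_norm_taylor_coeff_mult_power[OF hf3]) auto
  have sa: "summable (\<lambda>m. norm (a m))"
    unfolding a_def by (rule summable_norm_taylor_coeff[OF hf2]) simp
  have contB: "continuous_on {0..2*pi} (\<lambda>t. B (cis t))" by (rule continuous_on_cis_holomorphic[OF hB])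
  obtain MB where MB: "\<And>t. t \<in> {0..2*pi} \<Longrightarrow> norm (B (cis t)) \<le> MB"
    using continuous_on_Icc_bounded[OF contB] by blast
  have \<epsilon>: "0 \<le> \<epsilon>" using order_trans[OF norm_ge_zero Bs[of "1/2"]] by simp
  define q where "q m t = a m * (cnj (B (cis t)) * cis (of_int (int m - int k) * t))" for m t
  have int: "((\<lambda>t. \<Sum>m. q m t) has_integral (\<Sum>m. integral {0..2*pi} (q m))) {0..2*pi}"
  proof (rule has_integral_suminf_continuous[of "\<lambda>m. norm (a m) * MB"])
    show "summable (\<lambda>m. norm (a m) * MB)" using sa by (rule summable_mult2)
    show "norm (q m t) \<le> norm (a m) * MB" if "t \<in> {0..2*pi}" for m t
      using MB[OF that] by (auto simp: q_def norm_mult intro!: mult_left_mono)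
    show "continuous_on {0..2*pi} (q m)" for m
      unfolding q_def by (intro continuous_intros continuous_on_cnj contB)
  qed
  have sumq: "(\<Sum>m. q m t) = cnj (B (cis t)) * f (cis t) * cis (- (real k * t))" for t
  proof -
    have "summable (\<lambda>m. a m * cis (real m * t))"
      by (rule summable_norm_cancel) (use sa in \<open>simp add: norm_mult\<close>)
    hence "(\<Sum>m. a m * cis (real m * t) * (cnj (B (cis t)) * cis (- (real k * t)))) =
           f (cis t) * (cnj (B (cis t)) * cis (- (real k * t)))"
      by (simp add: suminf_mult2[symmetric] a_def taylor_expansion_cis[OF hf2])
    moreover have "q m t = a m * cis (real m * t) * (cnj (B (cis t)) * cis (- (real k * t)))" for m
      by (simp add: q_def cis_mult algebra_simps)
    ultimately show ?thesis by (simp add: mult_ac)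
  qed
  have qb: "norm (integral {0..2*pi} (q m)) \<le> norm (a m) * 2^m * (2 * pi * \<epsilon> / 2^k)" for m
  proof -
    have "integral {0..2*pi} (q m) = a m *
            (if 0 \<le> int m - int k then 2*pi * cnj (taylor_coeff B (nat (int m - int k))) else 0)"
      unfolding q_def
      by (intro integral_unique has_integral_mult_right has_integral_cnj_holomorphic_mult_cis[OF hB])
    hence "norm (integral {0..2*pi} (q m)) =
             norm (a m) * (if k \<le> m then 2*pi * norm (taylor_coeff B (m - k)) else 0)"
      by (simp add: norm_mult nat_diff_distrib)
    also have "\<dots> \<le> norm (a m) * (2^m * (2 * pi * \<epsilon> / 2^k))"
    proof (intro mult_left_mono)
      have "2*pi * norm (taylor_coeff B (m - k)) \<le> 2*pi * (\<epsilon> * 2^(m - k))"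
        using norm_taylor_coeff_le_half_circle[OF hB Bs] by simp
      also have "\<dots> = 2^m * (2 * pi * \<epsilon> / 2^k)" if "k \<le> m" using that by (simp add: power_diff)
      finally show "(if k \<le> m then 2*pi * norm (taylor_coeff B (m - k)) else 0) \<le> 2^m * (2 * pi * \<epsilon> / 2^k)"
        using \<epsilon> by auto
    qed simp
    finally show ?thesis by (simp add: mult.assoc)
  qed
  have "norm (\<Sum>m. integral {0..2*pi} (q m)) \<le> (\<Sum>m. norm (a m) * 2^m * (2 * pi * \<epsilon> / 2^k))"
    by (rule norm_suminf_le[OF qb summable_mult2[OF sA]])
  also have "\<dots> = A * (2 * pi * \<epsilon> / 2^k)" unfolding A_def using sA by (rule suminf_mult2[symmetric])
  finally have "norm (\<Sum>m. integral {0..2*pi} (q m)) / (2*pi) \<le> \<epsilon> * A / 2^k"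
    by (simp add: divide_simps mult_ac)
  moreover have "fourier_coeff (\<lambda>w. cnj (B w) * f w) k = (\<Sum>m. integral {0..2*pi} (q m)) / (2*pi)"
    unfolding fourier_coeff_def using int sumq by (simp add: integral_unique)
  ultimately show ?thesis by (simp add: norm_divide A_def a_def)
qed

lemma
  fixes x :: "nat \<Rightarrow> complex"
  assumes x: "\<And>k. norm (x k) \<le> D / 2^k" and z: "norm z \<le> 1"
  shows summable_dyadic_powser: "summable (\<lambda>k. x k * z^k)"
    and norm_dyadic_powser_le: "norm (\<Sum>k. x k * z^k) \<le> 2 * D"
proof -
  have le: "norm (x k * z^k) \<le> D * (1/2)^k" for k
  proof -
    have "norm (x k * z^k) \<le> (D / 2^k) * 1"
      unfolding norm_mult norm_power
      by (rule mult_mono) (use x z order_trans[OF norm_ge_zero x] in \<open>auto intro: power_le_one\<close>)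
    thus ?thesis by (simp add: power_one_over)
  qed
  have sg: "summable (\<lambda>k. D * (1/2::real)^k)" by (intro summable_mult summable_geometric) simp
  show "summable (\<lambda>k. x k * z^k)"
    by (rule summable_norm_cancel, rule summable_comparison_test[OF _ sg]) (use le in auto)
  have "norm (\<Sum>k. x k * z^k) \<le> (\<Sum>k. D * (1/2::real)^k)" by (rule norm_suminf_le[OF le sg])
  also have "\<dots> = 2 * D"
    using suminf_mult[OF summable_geometric[of "1/2::real"], of D] suminf_geometric[of "1/2::real"]
    by simp
  finally show "norm (\<Sum>k. x k * z^k) \<le> 2 * D" .
qed

lemma has_integral_fourier_coeff:
  assumes "continuous_on {0..2*pi} (\<lambda>t. \<phi> (cis t))"
  shows "((\<lambda>t. \<phi> (cis t) * cis (- (real n * t))) has_integral (2*pi * fourier_coeff \<phi> n)) {0..2*pi}"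
proof -
  have "(\<lambda>t. \<phi> (cis t) * cis (- (real n * t))) integrable_on {0..2*pi}"
    by (rule integrable_continuous_interval) (intro continuous_on_mult assms continuous_intros)
  thus ?thesis unfolding fourier_coeff_def by (simp add: has_integral_integral)
qed

text \<open>The sums \<open>\<Sum>j. a^j * c (k + j)\<close> come from expanding \<open>1 / (1 - a * cnj w)\<close> on the circle;
  the Fourier coefficients of \<open>cnj (b a) * \<phi>\<close> are expressed through them.\<close>
lemma
  fixes c :: "nat \<Rightarrow> complex" and a :: complex
  assumes a: "norm a < 1" and c: "\<And>k. norm (c k) \<le> C / 2^k"
  shows summable_geometric_shift: "summable (\<lambda>j. a^j * c (k + j))"
    and norm_geometric_shift_le: "norm (\<Sum>j. a^j * c (k + j)) \<le> 2 * C / 2^k"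
    and geometric_shift_rec: "(\<Sum>j. a^j * c (k + j)) = c k + a * (\<Sum>j. a^j * c (Suc k + j))"
proof -
  have c': "norm (c (k + j)) \<le> (C / 2^k) / 2^j" for k j
    using c[of "k + j"] by (simp add: power_add)
  have a': "norm a \<le> 1" using a by simp
  show sm: "summable (\<lambda>j. a^j * c (k + j))" for k
    using summable_dyadic_powser[OF c' a'] by (simp add: mult.commute)
  show "norm (\<Sum>j. a^j * c (k + j)) \<le> 2 * C / 2^k"
    using norm_dyadic_powser_le[OF c' a'] by (simp add: mult.commute)
  have "(\<Sum>j. a^(Suc j) * c (k + Suc j)) = (\<Sum>j. a^j * c (k + j)) - a^0 * c (k + 0)"
    by (rule suminf_split_head[OF sm])
  moreover have "(\<Sum>j. a^(Suc j) * c (k + Suc j)) = a * (\<Sum>j. a^j * c (Suc k + j))"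
    by (subst suminf_mult[OF sm, symmetric]) (simp add: mult_ac)
  ultimately show "(\<Sum>j. a^j * c (k + j)) = c k + a * (\<Sum>j. a^j * c (Suc k + j))"
    by (simp add: algebra_simps)
qed

lemma cnj_blaschke_factor_cis_sums:
  assumes a: "norm a < 1"
  shows "(\<lambda>j. a^j * cis (- (real j * t)) * (cnj a - cis (- t))) sums cnj (blaschke_factor a (cis t))"
proof -
  have "norm (a * cis (- t)) < 1" using a by (simp add: norm_mult)
  from sums_mult2[OF geometric_sums[OF this], of "cnj a - cis (- t)"]
  have "(\<lambda>j. a^j * cis (- (real j * t)) * (cnj a - cis (- t))) sums
          ((cnj a - cis (- t)) / (1 - a * cis (- t)))"
    by (simp add: power_mult_distrib Complex.DeMoivre)
  thus ?thesis by (simp add: blaschke_factor_def cis_cnj)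
qed

lemma fourier_coeff_cnj_blaschke_factor_mult:
  fixes \<phi> :: "complex \<Rightarrow> complex" and a :: complex
  assumes a: "norm a < 1" and cont: "continuous_on {0..2*pi} (\<lambda>t. \<phi> (cis t))"
    and cb: "\<And>k. norm (fourier_coeff \<phi> k) \<le> C / 2^k"
  shows "fourier_coeff (\<lambda>w. cnj (blaschke_factor a w) * \<phi> w) k =
     cnj a * (\<Sum>j. a^j * fourier_coeff \<phi> (k + j)) - (\<Sum>j. a^j * fourier_coeff \<phi> (Suc k + j))"
proof -
  define c where "c = fourier_coeff \<phi>"
  have sm: "\<And>k. summable (\<lambda>j. a^j * c (k + j))"
    using summable_geometric_shift[OF a, of c C] cb by (simp add: c_def)
  obtain M where M: "\<And>t. t \<in> {0..2*pi} \<Longrightarrow> norm (\<phi> (cis t)) \<le> M"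
    using continuous_on_Icc_bounded[OF cont] by blast
  define q where "q j t = a^j * cis (- (real j * t)) * (cnj a - cis (- t)) * (\<phi> (cis t) * cis (- (real k * t)))" for j t
  have int: "((\<lambda>t. \<Sum>j. q j t) has_integral (\<Sum>j. integral {0..2*pi} (q j))) {0..2*pi}"
  proof (rule has_integral_suminf_continuous[of "\<lambda>j. norm a ^ j * (2 * M)"])
    show "summable (\<lambda>j. norm a ^ j * (2 * M))" using a by (intro summable_mult2 summable_geometric) simp
    show "norm (q j t) \<le> norm a ^ j * (2 * M)" if t: "t \<in> {0..2*pi}" for j t
    proof -
      have "norm (cnj a - cis (- t)) \<le> 2"
        using norm_triangle_ineq4[of "cnj a" "cis (-t)"] a by simp
      hence "norm (cnj a - cis (- t)) * norm (\<phi> (cis t)) \<le> 2 * M"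
        by (rule mult_mono) (use M[OF t] in auto)
      thus ?thesis by (simp add: q_def norm_mult norm_power mult_left_mono mult.assoc)
    qed
    show "continuous_on {0..2*pi} (q j)" for j
      unfolding q_def by (intro continuous_intros cont)
  qed
  have sumq: "(\<Sum>j. q j t) = cnj (blaschke_factor a (cis t)) * \<phi> (cis t) * cis (- (real k * t))" for t
    using sums_mult2[OF cnj_blaschke_factor_cis_sums[OF a, of t], where c = "\<phi> (cis t) * cis (- (real k * t))"]
    by (simp add: q_def sums_iff mult.assoc)
  have "integral {0..2*pi} (q j) = 2*pi * (cnj a * (a^j * c (k + j)) - a^j * c (Suc k + j))" for j
  proof -
    have e1: "cis (- (real j * t)) * cis (- (real k * t)) = cis (- (real (k + j) * t))"
      and e2: "cis (- (real j * t)) * cis (- t) * cis (- (real k * t)) = cis (- (real (Suc k + j) * t))"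
      for t by (simp_all add: cis_mult algebra_simps)
    have "q j t = a^j * cnj a * (\<phi> (cis t) * (cis (- (real j * t)) * cis (- (real k * t)))) -
                  a^j * (\<phi> (cis t) * (cis (- (real j * t)) * cis (- t) * cis (- (real k * t))))" for t
      by (simp add: q_def algebra_simps)
    hence "q j = (\<lambda>t. a^j * cnj a * (\<phi> (cis t) * cis (- (real (k + j) * t))) -
                     a^j * (\<phi> (cis t) * cis (- (real (Suc k + j) * t))))"
      by (simp only: e1 e2) (rule ext)
    moreover have "((\<lambda>t. a^j * cnj a * (\<phi> (cis t) * cis (- (real (k + j) * t))) -
                     a^j * (\<phi> (cis t) * cis (- (real (Suc k + j) * t)))) has_integral
          (a^j * cnj a * (2*pi * c (k + j)) - a^j * (2*pi * c (Suc k + j)))) {0..2*pi}"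
      unfolding c_def by (intro has_integral_diff has_integral_mult_right has_integral_fourier_coeff cont)
    ultimately show ?thesis by (simp add: integral_unique algebra_simps)
  qed
  hence "(\<lambda>j. integral {0..2*pi} (q j)) sums
           (2*pi * (cnj a * (\<Sum>j. a^j * c (k + j)) - (\<Sum>j. a^j * c (Suc k + j))))"
    by (simp only:) (intro sums_mult sums_diff summable_sums sm)
  moreover have "fourier_coeff (\<lambda>w. cnj (blaschke_factor a w) * \<phi> w) k = (\<Sum>j. integral {0..2*pi} (q j)) / (2*pi)"
    unfolding fourier_coeff_def using int sumq by (simp add: integral_unique)
  ultimately show ?thesis by (simp add: sums_iff c_def)
qed

lemma riesz_proj_cnj_blaschke_factor_mult:
  fixes \<phi> :: "complex \<Rightarrow> complex" and a :: complex
  assumes a: "norm a < 1" and cont: "continuous_on {0..2*pi} (\<lambda>t. \<phi> (cis t))"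
    and cb: "\<And>k. norm (fourier_coeff \<phi> k) \<le> C / 2^k" and z: "norm z \<le> 1"
  shows "(a - z) * (riesz_proj (\<lambda>w. cnj (blaschke_factor a w) * \<phi> w) z - cnj a * riesz_proj \<phi> a) =
         (1 - cnj a * z) * (riesz_proj \<phi> z - riesz_proj \<phi> a)"
proof -
  define c where "c = fourier_coeff \<phi>"
  define u where "u k = (\<Sum>j. a^j * c (k + j))" for k
  have cb': "\<And>k. norm (c k) \<le> C / 2^k" using cb by (simp add: c_def)
  have nu: "norm (u k) \<le> 2 * C / 2^k" for k
    unfolding u_def by (rule norm_geometric_shift_le[OF a cb'])
  have nu': "norm (u (Suc k)) \<le> C / 2^k" for k
    using nu[of "Suc k"] by simp
  have sU: "summable (\<lambda>k. u k * z^k)" by (rule summable_dyadic_powser[OF nu z])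
  have sU': "summable (\<lambda>k. u (Suc k) * z^k)" by (rule summable_dyadic_powser[OF nu' z])
  define U where "U = (\<Sum>k. u k * z^k)"
  define U' where "U' = (\<Sum>k. u (Suc k) * z^k)"
  have "riesz_proj (\<lambda>w. cnj (blaschke_factor a w) * \<phi> w) z =
          (\<Sum>k. cnj a * (u k * z^k) - u (Suc k) * z^k)"
    unfolding riesz_proj_def fourier_coeff_cnj_blaschke_factor_mult[OF a cont cb]
    by (simp add: u_def c_def algebra_simps)
  also have "\<dots> = cnj a * U - U'"
    unfolding U_def U'_def using suminf_mult[OF sU, of "cnj a"]
    by (subst suminf_diff[symmetric]) (auto intro: summable_mult sU sU')
  finally have R1: "riesz_proj (\<lambda>w. cnj (blaschke_factor a w) * \<phi> w) z = cnj a * U - U'" .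
  have "riesz_proj \<phi> z = (\<Sum>k. u k * z^k - a * (u (Suc k) * z^k))"
    unfolding riesz_proj_def c_def[symmetric] u_def
    by (subst geometric_shift_rec[OF a cb']) (simp add: algebra_simps)
  also have "\<dots> = U - a * U'"
    unfolding U_def U'_def using suminf_mult[OF sU', of a]
    by (subst suminf_diff[symmetric]) (auto intro: summable_mult sU sU')
  finally have R2: "riesz_proj \<phi> z = U - a * U'" .
  have R3: "riesz_proj \<phi> a = u 0"
    unfolding riesz_proj_def u_def c_def by (simp add: mult.commute)
  have "(\<Sum>k. u (Suc k) * z^(Suc k)) = U - u 0 * z^0"
    unfolding U_def by (rule suminf_split_head[OF sU])
  moreover have "(\<Sum>k. u (Suc k) * z^(Suc k)) = z * U'"
    unfolding U'_def using suminf_mult[OF sU', of z] by (simp add: mult_ac)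
  ultimately have UU: "U = u 0 + z * U'" by (simp add: algebra_simps)
  show ?thesis unfolding R1 R2 R3 UU by (simp add: algebra_simps)
qed


locale blaschke_expansion =
  fixes lam :: "nat \<Rightarrow> complex" and f :: "complex \<Rightarrow> complex"
  assumes lam_disc: "\<And>n. n \<ge> 1 \<Longrightarrow> cmod (lam n) < 1"
    and f_entire: "f holomorphic_on UNIV"
begin

abbreviation Phi :: "nat \<Rightarrow> complex \<Rightarrow> complex" where
  "Phi n \<equiv> \<lambda>w. cnj (blaschke lam n w) * f w"

abbreviation TB :: "nat \<Rightarrow> complex \<Rightarrow> complex" where
  "TB n \<equiv> toeplitz (\<lambda>w. cnj (blaschke lam n w)) f"

abbreviation decay :: "nat \<Rightarrow> real" where
  "decay N \<equiv> exp (- (\<Sum>k=1..N. 1 - norm (lam k)) / 6)"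

abbreviation taylor_weight :: real where
  "taylor_weight \<equiv> \<Sum>m. norm (taylor_coeff f m) * 2^m"

abbreviation remainder :: "nat \<Rightarrow> complex \<Rightarrow> complex" where
  "remainder N z \<equiv> f z - (f (lam 1) +
     (\<Sum>n=1..N. (TB n (lam (Suc n)) - cnj (lam n) * TB (n - 1) (lam n)) * blaschke lam n z))"

lemma TB_eq_riesz_proj: "TB n = riesz_proj (Phi n)"
  by (simp add: toeplitz_def)

lemma taylor_weight_nonneg: "0 \<le> taylor_weight"
proof -
  have "f holomorphic_on ball 0 3" using f_entire by (rule holomorphic_on_subset) auto
  hence "summable (\<lambda>m. norm (taylor_coeff f m) * 2^m)"
    by (rule summable_norm_taylor_coeff_mult_power) auto
  thus ?thesis by (rule suminf_nonneg) simp
qed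

lemma norm_fourier_coeff_Phi_le: "norm (fourier_coeff (Phi n) k) \<le> decay n * taylor_weight / 2^k"
proof -
  obtain \<rho> where "1 < \<rho>" "blaschke lam n holomorphic_on ball 0 \<rho>"
    using blaschke_holomorphic_beyond_disc[where lam = lam and N = n, OF lam_disc] by blast
  thus ?thesis
    by (intro norm_fourier_coeff_cnj_mult_le f_entire norm_blaschke_le_exp lam_disc) auto
qed

lemma continuous_on_Phi_cis: "continuous_on {0..2*pi} (\<lambda>t. Phi n (cis t))"
proof -
  obtain \<rho> where "1 < \<rho>" "blaschke lam n holomorphic_on ball 0 \<rho>"
    using blaschke_holomorphic_beyond_disc[where lam = lam and N = n, OF lam_disc] by blast
  moreover have "f holomorphic_on ball 0 \<rho>" using f_entire by (rule holomorphic_on_subset) auto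
  ultimately show ?thesis
    by (intro continuous_on_mult continuous_on_cnj continuous_on_cis_holomorphic) auto
qed

lemma norm_TB_le:
  assumes "norm z \<le> 1"
  shows "norm (TB n z) \<le> 2 * (decay n * taylor_weight)"
  unfolding TB_eq_riesz_proj riesz_proj_def
  by (rule norm_dyadic_powser_le[OF norm_fourier_coeff_Phi_le assms])

lemma TB_0:
  assumes "norm z < 2"
  shows "TB 0 z = f z"
proof -
  have hf2: "f holomorphic_on ball 0 2" using f_entire by (rule holomorphic_on_subset) auto
  have "(\<lambda>n. (deriv ^^ n) f 0 / fact n * (z - 0)^n) sums f z"
    by (rule holomorphic_power_series[OF hf2]) (use assms in simp)
  thus ?thesis
    unfolding TB_eq_riesz_proj riesz_proj_def
    by (simp add: fourier_coeff_eq_taylor_coeff[OF hf2] taylor_coeff_def sums_iff)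
qed

lemma TB_step:
  assumes z: "norm z \<le> 1"
  shows "TB n z - TB n (lam (Suc n)) =
           blaschke_factor (lam (Suc n)) z * (TB (Suc n) z - cnj (lam (Suc n)) * TB n (lam (Suc n)))"
proof -
  define a where "a = lam (Suc n)"
  have a: "norm a < 1" using lam_disc[of "Suc n"] by (simp add: a_def)
  have "Phi (Suc n) = (\<lambda>w. cnj (blaschke_factor a w) * Phi n w)"
    by (simp add: a_def fun_eq_iff blaschke_Suc mult_ac)
  hence "(a - z) * (TB (Suc n) z - cnj a * TB n a) = (1 - cnj a * z) * (TB n z - TB n a)"
    unfolding TB_eq_riesz_proj
    using riesz_proj_cnj_blaschke_factor_mult[OF a continuous_on_Phi_cis norm_fourier_coeff_Phi_le z]
    by simp
  moreover have "1 - cnj a * z \<noteq> 0"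
    using a z mult_left_le[of "norm z" "norm a"] by (intro blaschke_factor_denom_nonzero) simp
  ultimately show ?thesis by (simp add: a_def blaschke_factor_def field_simps)
qed

lemma remainder_eq:
  assumes z: "norm z \<le> 1"
  shows "remainder N z = blaschke lam (Suc N) z * (TB (Suc N) z - cnj (lam (Suc N)) * TB N (lam (Suc N)))"
proof (induction N)
  case 0
  have "norm (lam 1) < 2" using lam_disc[of 1] by simp
  hence "f z - f (lam 1) = TB 0 z - TB 0 (lam (Suc 0))" using z TB_0[of z] TB_0[of "lam 1"] by simp
  also have "\<dots> = blaschke_factor (lam (Suc 0)) z * (TB (Suc 0) z - cnj (lam (Suc 0)) * TB 0 (lam (Suc 0)))"
    by (rule TB_step[OF z])
  finally show ?case by (simp add: blaschke_Suc)
next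
  case (Suc N)
  let ?c = "TB (Suc N) (lam (Suc (Suc N))) - cnj (lam (Suc N)) * TB N (lam (Suc N))"
  have "remainder (Suc N) z = remainder N z - ?c * blaschke lam (Suc N) z"
    by (simp add: algebra_simps)
  also have "\<dots> = blaschke lam (Suc N) z * (TB (Suc N) z - TB (Suc N) (lam (Suc (Suc N))))"
    unfolding Suc.IH by (simp add: algebra_simps)
  also have "\<dots> = blaschke lam (Suc (Suc N)) z *
                   (TB (Suc (Suc N)) z - cnj (lam (Suc (Suc N))) * TB (Suc N) (lam (Suc (Suc N))))"
    unfolding TB_step[OF z] by (simp add: blaschke_Suc mult_ac)
  finally show ?case .
qed

lemma h2_norm_sq_remainder_le:
  "h2_norm_sq (remainder N) \<le> ennreal (12 * taylor_weight^2 * (decay N)^2)"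
proof -
  obtain \<rho> where r: "1 < \<rho>" "\<And>n. n \<le> N \<Longrightarrow> blaschke lam n holomorphic_on ball 0 \<rho>"
    using blaschke_holomorphic_beyond_disc[where lam = lam and N = N, OF lam_disc] by blast
  have hol: "remainder N holomorphic_on ball 0 \<rho>"
    by (intro holomorphic_on_diff holomorphic_on_add holomorphic_on_sum holomorphic_on_mult
          holomorphic_on_const holomorphic_on_subset[OF f_entire] r(2)) auto
  define K where "K = cnj (lam (Suc N)) * TB N (lam (Suc N))"
  define \<eta> where "\<eta> k = fourier_coeff (Phi (Suc N)) k - (if k = 0 then K else 0)" for k
  define D where "D = decay (Suc N) * taylor_weight + norm K"
  have \<eta>_le: "norm (\<eta> k) \<le> D / 2^k" for k
  proof (cases "k = 0")
    case True
    thus ?thesis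
      using norm_triangle_ineq4[of "fourier_coeff (Phi (Suc N)) 0" K] norm_fourier_coeff_Phi_le[of "Suc N" 0]
      by (simp add: \<eta>_def D_def)
  next
    case False
    have "norm (\<eta> k) \<le> decay (Suc N) * taylor_weight / 2^k"
      using False norm_fourier_coeff_Phi_le[of "Suc N" k] by (simp add: \<eta>_def)
    also have "\<dots> \<le> D / 2^k" unfolding D_def by (intro divide_right_mono) auto
    finally show ?thesis .
  qed
  have circle: "norm (remainder N (cis t)) = norm (\<Sum>k. \<eta> k * cis (real k * t))" for t
  proof -
    have "summable (\<lambda>k. fourier_coeff (Phi (Suc N)) k * cis t ^ k)"
      by (rule summable_dyadic_powser[OF norm_fourier_coeff_Phi_le]) simp
    hence TB_sums: "(\<lambda>k. fourier_coeff (Phi (Suc N)) k * cis (real k * t)) sums TB (Suc N) (cis t)"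
      unfolding TB_eq_riesz_proj riesz_proj_def by (simp add: sums_iff Complex.DeMoivre)
    have "(\<lambda>k. fourier_coeff (Phi (Suc N)) k * cis (real k * t) - (if k = 0 then K else 0)) =
          (\<lambda>k. \<eta> k * cis (real k * t))"
      by (auto simp: \<eta>_def fun_eq_iff algebra_simps)
    hence "(\<lambda>k. \<eta> k * cis (real k * t)) sums (TB (Suc N) (cis t) - K)"
      using sums_diff[OF TB_sums sums_single[of 0 "\<lambda>_. K"]] by simp
    moreover have "remainder N (cis t) = blaschke lam (Suc N) (cis t) * (TB (Suc N) (cis t) - K)"
      unfolding K_def by (rule remainder_eq) simp
    hence "norm (remainder N (cis t)) = norm (TB (Suc N) (cis t) - K)"
      by (simp add: norm_mult norm_blaschke_circle[OF lam_disc])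
    ultimately show ?thesis by (simp add: sums_iff)
  qed
  have "h2_norm_sq (remainder N) \<le> ennreal (4/3 * D^2)"
    by (rule h2_norm_sq_le_of_circle_modulus[OF hol r(1) \<eta>_le circle])
  also have "4/3 * D^2 \<le> 12 * taylor_weight^2 * (decay N)^2"
  proof -
    have "norm K \<le> 1 * norm (TB N (lam (Suc N)))"
      unfolding K_def norm_mult using lam_disc[of "Suc N"] by (intro mult_right_mono) auto
    also have "\<dots> \<le> 2 * (decay N * taylor_weight)"
      using norm_TB_le[of "lam (Suc N)" N] lam_disc[of "Suc N"] by simp
    finally have "norm K \<le> 2 * (decay N * taylor_weight)" .
    moreover have "decay (Suc N) * taylor_weight \<le> decay N * taylor_weight"
      using lam_disc[of "Suc N"] taylor_weight_nonneg by (intro mult_right_mono) auto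
    ultimately have "D \<le> 3 * (decay N * taylor_weight)" by (simp add: D_def)
    moreover have "0 \<le> D" using taylor_weight_nonneg by (simp add: D_def)
    ultimately have "D^2 \<le> (3 * (decay N * taylor_weight))^2" by (rule power_mono)
    thus ?thesis by (simp add: power_mult_distrib mult_ac)
  qed
  finally show ?thesis by (simp add: ennreal_leI)
qed

end

theorem corollary5p1:
  fixes lam :: "nat \<Rightarrow> complex" and f :: "complex \<Rightarrow> complex"
  assumes lam_disc: "\<And>n. n \<ge> 1 \<Longrightarrow> cmod (lam n) < 1"
    and lam_div: "(\<Sum>n. ennreal (1 - cmod (lam (Suc n)))) = \<infinity>"
    and f_entire: "f holomorphic_on UNIV"
  shows "(\<lambda>N. h2_norm_sq (\<lambda>z. f z - (f (lam 1) +
            (\<Sum>n=1..N. (toeplitz (\<lambda>w. cnj (blaschke lam n w)) f (lam (Suc n))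
                        - cnj (lam n) * toeplitz (\<lambda>w. cnj (blaschke lam (n - 1) w)) f (lam n))
                       * blaschke lam n z))))
         \<longlonglongrightarrow> 0"
proof -
  interpret blaschke_expansion lam f using lam_disc f_entire by unfold_locales
  have "0 \<le> 1 - cmod (lam (Suc n))" for n using lam_disc[of "Suc n"] by simp
  hence "(\<lambda>N. exp (- (1/6) * (\<Sum>i<N. 1 - cmod (lam (Suc i))))) \<longlonglongrightarrow> 0"
    using lam_div by (intro exp_neg_partial_sums_tendsto_0) auto
  also have "(\<lambda>N. exp (- (1/6) * (\<Sum>i<N. 1 - cmod (lam (Suc i))))) = decay"
  proof
    fix N
    show "exp (- (1/6) * (\<Sum>i<N. 1 - cmod (lam (Suc i)))) = decay N"
      using sum_bounds_lt_plus1[of "\<lambda>k. 1 - cmod (lam k)" N] by simp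
  qed
  finally have "(\<lambda>N. ennreal (12 * taylor_weight^2 * (decay N)^2)) \<longlonglongrightarrow> ennreal (12 * taylor_weight^2 * 0^2)"
    by (intro tendsto_ennrealI tendsto_intros)
  hence bound_lim: "(\<lambda>N. ennreal (12 * taylor_weight^2 * (decay N)^2)) \<longlonglongrightarrow> 0" by simp
  show ?thesis
    by (rule tendsto_sandwich[OF always_eventually always_eventually tendsto_const bound_lim])
       (simp, use h2_norm_sq_remainder_le in blast)
qed

end
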